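(* Fix integers $n,d\in\mathbb{N}$, let $\mathcal{A}$ be either the Čech class or the Alpha class of convex sets in $\mathbb{R}^d$, and let $\mathcal{Q}$ be a probability distribution on $(\mathbb{R}^d)^n$. Every graph $\Gamma$ that is feasible (for $d$, $n$, $\mathcal{A}$, $\mathcal{Q}$) is isomorphic to $\mathcal{G}(\mathcal{V},r,\mathcal{A})$ for some collection $\mathcal{V}$ of $n$ points in the closed unit ball $\mathbb{B}^d\subset\mathbb{R}^d$ and $r=1/n$.
   Context: For a finite collection $F=\{A_j : j\in I\}$ of nonempty convex sets, its nerve is $\mathrm{Nrv}(F)=\{\sigma\subseteq I : \bigcap_{j\in\sigma}A_j\neq\varnothing\}$. For a finite point set $\mathcal{V}=\{v_1,\dots,v_n\}\subset\mathbb{R}^d$ and $r>0$, let $B_{v,r}=v+r\mathbb{B}^d$ be the closed ball of radius $r$ about $v$ and $C_v=\{x\in\mathbb{R}^d:\|x-v\|\le\|x-u\|\ \forall u\in\mathcal{V}\}$ the Voronoi cell of $v$. The Čech complex is the nerve of $\{B_{v,r}: v\in\mathcal{V}\}$; the Alpha complex is the nerve of $\{B_{v,r}\cap C_v : v\in\mathcal{V}\}$. The graph $\mathcal{G}(\mathcal{V},r,\mathcal{A})$ is the 1-skeleton of the corresponding complex: vertex set $\mathcal{V}$, with $\{v_i,v_j\}$ an edge iff the two sets associated with $v_i$ and $v_j$ intersect. Two graphs are isomorphic if there is a bijection of vertex sets preserving adjacency in both directions. Given $d,n$, a class $\mathcal{A}$, and a distribution $\mathcal{Q}$ of random vectors $\mathbf{V}=(V_1,\dots,V_n)$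 in $(\mathbb{R}^d)^n$, a graph $\Gamma$ is called feasible if for some $r>0$, $\Pr\{\mathcal{G}(\mathbf{V},r,\mathcal{A})\cong\Gamma\}>0$ when $\mathbf{V}\sim\mathcal{Q}$. *)

theory Defs
  imports "HOL-Analysis.Analysis" "HOL-Probability.Probability"
begin

datatype convex_class = Cech | Alpha

text \<open>Voronoi cell of the i-th point of the configuration v (index type 'n = {1..n}).\<close>
definition voronoi_cell :: "(real^'d)^'n \<Rightarrow> 'n \<Rightarrow> (real^'d) set" where
  "voronoi_cell v i = {x. \<forall>j. dist x (v$i) \<le> dist x (v$j)}"

definition assoc_set :: "convex_class \<Rightarrow> (real^'d)^'n \<Rightarrow> real \<Rightarrow> 'n \<Rightarrow> (real^'d) set" where
  "assoc_set A v r i = (case A of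
      Cech \<Rightarrow> cball (v$i) r
    | Alpha \<Rightarrow> cball (v$i) r \<inter> voronoi_cell v i)"

text \<open>A (simple) graph is a pair (vertex set, set of edges), edges being 2-element sets.
  The graph G(V,r,A): the 1-skeleton of the nerve; vertices are the indices of the points.\<close>
definition geom_graph :: "(real^'d)^'n \<Rightarrow> real \<Rightarrow> convex_class \<Rightarrow> 'n set \<times> 'n set set" where
  "geom_graph v r A = (UNIV,
     {{i, j} | i j. i \<noteq> j \<and> assoc_set A v r i \<inter> assoc_set A v r j \<noteq> {}})"

definition graph_iso :: "'a set \<times> 'a set set \<Rightarrow> 'b set \<times> 'b set set \<Rightarrow> bool" where
  "graph_iso G H = (\<exists>f. bij_betw f (fst G) (fst H) \<and>
     (\<forall>x\<in>fst G. \<forall>y\<in>fst G. {x, y} \<in> snd G \<longleftrightarrow> {f x, f y} \<in> snd H))"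

definition feasible :: "((real^'d)^'n) measure \<Rightarrow> convex_class \<Rightarrow> 'a set \<times> 'a set set \<Rightarrow> bool" where
  "feasible Q A \<Gamma> = (\<exists>r>0. measure Q {v \<in> space Q. graph_iso (geom_graph v r A) \<Gamma>} > 0)"

end

theory Submission
  imports Defs
begin

text \<open>Take a configuration realising \<Gamma> at some radius r and rescale it by 1/(n r), so that
  the radius becomes 1/n. Call two points chained if they are joined by a sequence of points with
  consecutive distances at most 2/n; a chained class of k points fits into a ball of radius
  (k - 1)/n. Translating every class separately does not change the graph as long as points of
  different classes stay more than 2/n apart: their balls are then disjoint, and near each point
  the far-away points do not affect the Voronoi cells. Placing the classes one after another along
  a fixed direction, with gaps slightly larger than 2/n, all n points fit into a ball of radius
  (n - 1)(n + 1)/n^2 < 1.\<close>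

lemma cball_subset_cball:
  fixes a b :: "'a::metric_space"
  assumes "dist a b + r \<le> s"
  shows "cball b r \<subseteq> cball a s"
proof
  fix x assume "x \<in> cball b r"
  then show "x \<in> cball a s" using assms dist_triangle[of a x b] by simp
qed

lemma cball_cover_two_cballs:
  fixes c1 c2 :: "'a::real_normed_vector"
  assumes "R1 \<le> \<rho>" "R2 \<le> \<rho>" "dist c1 c2 + R1 + R2 \<le> 2 * \<rho>"
  shows "\<exists>c. cball c1 R1 \<subseteq> cball c \<rho> \<and> cball c2 R2 \<subseteq> cball c \<rho>"
proof -
  define D where "D = dist c1 c2"
  define t where "t = max 0 (D - (\<rho> - R2))"
  define c where "c = c1 + (t / D) *\<^sub>R (c2 - c1)"
  have t: "0 \<le> t" "t \<le> D" "t \<le> \<rho> - R1" "D - t \<le> \<rho> - R2"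
    using assms by (auto simp: t_def D_def)
  have "dist c c1 = t \<and> dist c c2 = D - t"
  proof (cases "D = 0")
    case True
    then show ?thesis using t by (simp add: c_def D_def)
  next
    case False
    have "c - c1 = (t / D) *\<^sub>R (c2 - c1)" "c - c2 = (1 - t / D) *\<^sub>R (c1 - c2)"
      by (simp_all add: c_def algebra_simps)
    moreover have "norm (c2 - c1) = D" "norm (c1 - c2) = D"
      by (simp_all add: D_def dist_norm norm_minus_commute)
    ultimately show ?thesis
      using t False by (simp add: dist_norm divide_simps)
  qed
  with t show ?thesis by (intro exI[of _ c] conjI cball_subset_cball) auto
qed

definition chained :: "real \<Rightarrow> ('i \<Rightarrow> 'a::metric_space) \<Rightarrow> ('i \<times> 'i) set" where
  "chained \<delta> p = {(i, j). dist (p i) (p j) \<le> \<delta>}\<^sup>*"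

lemma equiv_chained: "equiv UNIV (chained \<delta> p)"
proof -
  have "sym {(i, j). dist (p i) (p j) \<le> \<delta>}" by (auto simp: sym_def dist_commute)
  then show ?thesis
    unfolding chained_def
    by (intro equivI refl_rtrancl sym_rtrancl trans_rtrancl) auto
qed

lemma rtrancl_leaves_set:
  assumes "(a, z) \<in> E\<^sup>*" "a \<in> S" "z \<notin> S"
  obtains x y where "x \<in> S" "y \<notin> S" "(x, y) \<in> E"
  using assms by (induction rule: rtrancl_induct) auto

lemma chained_class_grow_cover:
  fixes p :: "'i \<Rightarrow> 'a::real_normed_vector"
  assumes K: "K \<in> UNIV // chained \<delta> p" and "0 \<le> \<delta>"
    and S: "S \<subseteq> K" "S \<noteq> {}" "S \<noteq> K" "finite S"
    and cover: "p ` S \<subseteq> cball c ((real (card S) - 1) * \<delta> / 2)"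
  obtains y c' where "y \<in> K - S" "p ` insert y S \<subseteq> cball c' (real (card S) * \<delta> / 2)"
proof -
  obtain a z where az: "a \<in> S" "z \<in> K - S" using S by blast
  then have "(a, z) \<in> chained \<delta> p"
    using quotient_eq_iff[OF equiv_chained K K, of a z] S(1) by blast
  then obtain x y where xy: "x \<in> S" "y \<notin> S" "dist (p x) (p y) \<le> \<delta>"
    unfolding chained_def using az by (auto elim: rtrancl_leaves_set)
  have "(x, y) \<in> chained \<delta> p" using xy(3) by (auto simp: chained_def)
  then have "y \<in> K" using in_quotient_imp_closed[OF equiv_chained K] xy(1) S(1) by blast
  have "dist c (p y) \<le> dist c (p x) + dist (p x) (p y)" by (rule dist_triangle)
  also have "\<dots> \<le> (real (card S) - 1) * \<delta> / 2 + \<delta>"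
    using cover xy(1,3) by (intro add_mono) auto
  finally have "dist c (p y) + (real (card S) - 1) * \<delta> / 2 + 0 \<le> 2 * (real (card S) * \<delta> / 2)"
    by (simp add: field_simps)
  then have "\<exists>c'. cball c ((real (card S) - 1) * \<delta> / 2) \<subseteq> cball c' (real (card S) * \<delta> / 2)
      \<and> cball (p y) 0 \<subseteq> cball c' (real (card S) * \<delta> / 2)"
    using \<open>0 \<le> \<delta>\<close> by (intro cball_cover_two_cballs) (simp_all add: algebra_simps)
  then obtain c' where
      "cball c ((real (card S) - 1) * \<delta> / 2) \<subseteq> cball c' (real (card S) * \<delta> / 2)"
      "cball (p y) 0 \<subseteq> cball c' (real (card S) * \<delta> / 2)"
    by blast
  moreover have "p y \<in> cball (p y) 0" by simp
  ultimately show thesis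
    using cover \<open>y \<in> K\<close> xy(2) by (intro that[of y c']) blast+
qed

lemma chained_class_cover:
  fixes p :: "'i \<Rightarrow> 'a::real_normed_vector"
  assumes K: "K \<in> UNIV // chained \<delta> p" "finite K" and "0 \<le> \<delta>"
  obtains c where "p ` K \<subseteq> cball c ((real (card K) - 1) * \<delta> / 2)"
proof -
  have "K \<noteq> {}" using in_quotient_imp_non_empty[OF equiv_chained K(1)] .
  then have "1 \<le> card K" using K(2) by (simp add: Suc_leI card_gt_0_iff)
  then have "\<exists>S\<subseteq>K. card S = card K \<and> (\<exists>c. p ` S \<subseteq> cball c ((real (card K) - 1) * \<delta> / 2))"
  proof (induction rule: dec_induct)
    case base
    obtain k where "k \<in> K" using \<open>K \<noteq> {}\<close> by blast
    then show ?case by (intro exI[of _ "{k}"] exI[of _ "p k"]) auto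
  next
    case (step m)
    then obtain S c where S: "S \<subseteq> K" "card S = m" "p ` S \<subseteq> cball c ((real m - 1) * \<delta> / 2)"
      by blast
    moreover have "finite S" using S(1) K(2) by (rule finite_subset)
    moreover have "S \<noteq> {}" "S \<noteq> K" using S step by auto
    ultimately obtain y c' where "y \<in> K - S" "p ` insert y S \<subseteq> cball c' (real m * \<delta> / 2)"
      using chained_class_grow_cover[OF K(1) \<open>0 \<le> \<delta>\<close>] by metis
    with S \<open>finite S\<close> show ?case by (intro exI[of _ "insert y S"]) auto
  qed
  then obtain S c where "S \<subseteq> K" "card S = card K" "p ` S \<subseteq> cball c ((real (card K) - 1) * \<delta> / 2)"
    by blast
  moreover from this K(2) have "S = K" by (intro card_subset_eq)
  ultimately show thesis by (intro that) auto
qed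

lemma translate_apart:
  fixes w q :: "'i \<Rightarrow> 'a::real_inner" and e :: 'a
  assumes "finite S" "S \<noteq> {}" "finite K" "K \<noteq> {}" "norm e = 1" "0 \<le> d"
    and cover_S: "w ` S \<subseteq> cball c1 R1" and cover_K: "q ` K \<subseteq> cball c2 R2"
  obtains \<beta> c where "\<forall>j\<in>S. \<forall>i\<in>K. d \<le> dist (w j) (q i + \<beta>)"
    "w ` S \<subseteq> cball c (R1 + R2 + d / 2)" "(\<lambda>i. q i + \<beta>) ` K \<subseteq> cball c (R1 + R2 + d / 2)"
proof -
  define hi where "hi = arg_min_on (\<lambda>j. - (e \<bullet> w j)) S"
  define lo where "lo = arg_min_on (\<lambda>i. e \<bullet> q i) K"
  have hi: "hi \<in> S" "\<forall>j\<in>S. e \<bullet> w j \<le> e \<bullet> w hi"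
    using arg_min_if_finite(1) arg_min_least[of S _ "\<lambda>j. - (e \<bullet> w j)"] assms(1,2)
    unfolding hi_def by auto
  have lo: "lo \<in> K" "\<forall>i\<in>K. e \<bullet> q lo \<le> e \<bullet> q i"
    using arg_min_if_finite(1) arg_min_least[of K _ "\<lambda>i. e \<bullet> q i"] assms(3,4)
    unfolding lo_def by auto
  \<comment> \<open>Shift K along e until its lowest point lies d beyond the highest point of S.\<close>
  define \<beta> where "\<beta> = w hi + d *\<^sub>R e - q lo"
  have apart: "d \<le> dist (w j) (q i + \<beta>)" if "j \<in> S" "i \<in> K" for i j
  proof -
    have "e \<bullet> (q i + \<beta> - w j) = (e \<bullet> q i - e \<bullet> q lo) + d + (e \<bullet> w hi - e \<bullet> w j)"
      using \<open>norm e = 1\<close> by (simp add: \<beta>_def inner_diff_right inner_add_right norm_eq_1)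
    also have "\<dots> \<ge> d" using hi lo that by (smt (verit))
    finally have "d \<le> e \<bullet> (q i + \<beta> - w j)" .
    also have "\<dots> \<le> norm (q i + \<beta> - w j)"
      using norm_cauchy_schwarz[of e "q i + \<beta> - w j"] \<open>norm e = 1\<close> by simp
    finally show ?thesis by (simp add: dist_norm norm_minus_commute)
  qed
  have hi_R1: "dist c1 (w hi) \<le> R1" using cover_S hi(1) by auto
  have lo_R2: "dist c2 (q lo) \<le> R2" using cover_K lo(1) by auto
  have "0 \<le> R1" "0 \<le> R2"
    using hi_R1 lo_R2 zero_le_dist[of c1 "w hi"] zero_le_dist[of c2 "q lo"] by linarith+
  have "dist c1 (c2 + \<beta>) \<le> dist c1 (w hi) + dist (w hi) (q lo + \<beta>) + dist (q lo + \<beta>) (c2 + \<beta>)"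
    by (meson dist_triangle order_trans add_right_mono)
  also have "\<dots> \<le> R1 + d + R2"
  proof (intro add_mono)
    show "dist c1 (w hi) \<le> R1" by (fact hi_R1)
    show "dist (w hi) (q lo + \<beta>) \<le> d" using \<open>norm e = 1\<close> \<open>0 \<le> d\<close> by (simp add: \<beta>_def dist_norm)
    show "dist (q lo + \<beta>) (c2 + \<beta>) \<le> R2" using lo_R2 by (simp add: dist_commute)
  qed
  finally have "\<exists>c. cball c1 R1 \<subseteq> cball c (R1 + R2 + d / 2)
      \<and> cball (c2 + \<beta>) R2 \<subseteq> cball c (R1 + R2 + d / 2)"
    using \<open>0 \<le> R1\<close> \<open>0 \<le> R2\<close> \<open>0 \<le> d\<close> by (intro cball_cover_two_cballs) simp_all
  then obtain c where
      "cball c1 R1 \<subseteq> cball c (R1 + R2 + d / 2)" "cball (c2 + \<beta>) R2 \<subseteq> cball c (R1 + R2 + d / 2)"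
    by blast
  moreover have "(\<lambda>i. q i + \<beta>) ` K \<subseteq> cball (c2 + \<beta>) R2"
    using cover_K by (auto simp: dist_add_cancel2)
  ultimately show thesis using apart cover_S by (intro that[of \<beta> c]) blast+
qed

text \<open>The translation is a function of the class R``{i}, so every class is moved rigidly.\<close>

definition arranged ::
    "('i \<times> 'i) set \<Rightarrow> real \<Rightarrow> ('i \<Rightarrow> 'a::real_normed_vector) \<Rightarrow> 'i set \<Rightarrow> ('i set \<Rightarrow> 'a) \<Rightarrow> 'a \<Rightarrow> bool"
  where
  "arranged R d p I \<tau> c \<longleftrightarrow>
     (\<forall>i\<in>I. \<forall>j\<in>I. (i, j) \<notin> R \<longrightarrow> d \<le> dist (p i + \<tau> (R``{i})) (p j + \<tau> (R``{j}))) \<and>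
     (\<lambda>i. p i + \<tau> (R``{i})) ` I \<subseteq> cball c ((real (card I) - 1) * d / 2)"

lemma equiv_class_of_mem_quotient:
  assumes "equiv A r" "X \<in> A // r" "x \<in> X"
  shows "r `` {x} = X"
  using assms by (metis Image_singleton_iff equiv_class_eq quotientE)

lemma arranged_class:
  assumes "equiv UNIV R" "K \<in> UNIV // R" and "p ` K \<subseteq> cball c ((real (card K) - 1) * d / 2)"
  shows "arranged R d p K (\<lambda>_. 0) c"
  using assms quotient_eq_iff[OF assms(1,2,2)] unfolding arranged_def by auto

lemma arranged_insert_class:
  fixes p :: "'i::finite \<Rightarrow> 'a::{real_inner, perfect_space}"
  assumes R: "equiv UNIV R" and K: "K \<in> UNIV // R" and "S \<inter> K = {}" "S \<noteq> {}" and "0 \<le> d"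
    and arr: "arranged R d p S \<tau> c1" and cover_K: "p ` K \<subseteq> cball c2 ((real (card K) - 1) * d / 2)"
  obtains \<sigma> c where "arranged R d p (K \<union> S) \<sigma> c"
proof -
  define \<rho> where "\<rho> = (real (card S) - 1) * d / 2 + (real (card K) - 1) * d / 2 + d / 2"
  have "K \<noteq> {}" using in_quotient_imp_non_empty[OF R K] .
  obtain e :: 'a where "norm e = 1" using vector_choose_size[of 1] by auto
  obtain \<beta> c where far: "\<forall>j\<in>S. \<forall>i\<in>K. d \<le> dist (p j + \<tau> (R``{j})) (p i + \<beta>)"
    and cover_S: "(\<lambda>i. p i + \<tau> (R``{i})) ` S \<subseteq> cball c \<rho>"
    and cover_K': "(\<lambda>i. p i + \<beta>) ` K \<subseteq> cball c \<rho>"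
    using translate_apart[OF finite \<open>S \<noteq> {}\<close> finite \<open>K \<noteq> {}\<close> \<open>norm e = 1\<close> \<open>0 \<le> d\<close> _ cover_K] arr
    unfolding arranged_def \<rho>_def by blast
  define \<sigma> where "\<sigma> = \<tau>(K := \<beta>)"
  have \<sigma>_K: "\<sigma> (R``{i}) = \<beta>" if "i \<in> K" for i
    using equiv_class_of_mem_quotient[OF R K that] by (simp add: \<sigma>_def)
  have \<sigma>_S: "\<sigma> (R``{i}) = \<tau> (R``{i})" if "i \<in> S" for i
    using that \<open>S \<inter> K = {}\<close> equiv_class_self[OF R] by (fastforce simp: \<sigma>_def)
  have "d \<le> dist (p i + \<sigma> (R``{i})) (p j + \<sigma> (R``{j}))"
    if ij: "i \<in> K \<union> S" "j \<in> K \<union> S" and "(i, j) \<notin> R" for i j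
  proof -
    consider "i \<in> K" "j \<in> K" | "i \<in> K" "j \<in> S" | "i \<in> S" "j \<in> K" | "i \<in> S" "j \<in> S"
      using ij by blast
    then show ?thesis
    proof cases
      case 1
      then show ?thesis using \<open>(i, j) \<notin> R\<close> quotient_eq_iff[OF R K K] by blast
    next
      case 2
      then show ?thesis using far \<sigma>_K \<sigma>_S by (simp add: dist_commute)
    next
      case 3
      then show ?thesis using far \<sigma>_K \<sigma>_S by simp
    next
      case 4
      then show ?thesis using arr \<open>(i, j) \<notin> R\<close> \<sigma>_S unfolding arranged_def by simp
    qed
  qed
  moreover have "card (K \<union> S) = card K + card S" using \<open>S \<inter> K = {}\<close> by (intro card_Un_disjoint) auto
  then have "\<rho> = (real (card (K \<union> S)) - 1) * d / 2" by (simp add: \<rho>_def field_simps)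
  with cover_S cover_K' \<sigma>_K \<sigma>_S
  have "(\<lambda>i. p i + \<sigma> (R``{i})) ` (K \<union> S) \<subseteq> cball c ((real (card (K \<union> S)) - 1) * d / 2)"
    by auto
  ultimately show thesis by (intro that[of \<sigma> c]) (auto simp: arranged_def)
qed

lemma arranged_classes:
  fixes p :: "'i::finite \<Rightarrow> 'a::{real_inner, perfect_space}"
  assumes R: "equiv UNIV R" and "\<C> \<subseteq> UNIV // R" "\<C> \<noteq> {}" "0 \<le> d"
    and cover: "\<And>K. K \<in> \<C> \<Longrightarrow> \<exists>c. p ` K \<subseteq> cball c ((real (card K) - 1) * d / 2)"
  shows "\<exists>\<tau> c. arranged R d p (\<Union>\<C>) \<tau> c"
proof -
  have "finite \<C>" by simp
  then show ?thesis using \<open>\<C> \<noteq> {}\<close> \<open>\<C> \<subseteq> UNIV // R\<close> cover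
  proof (induction rule: finite_ne_induct)
    case (singleton K)
    then obtain c where c: "p ` K \<subseteq> cball c ((real (card K) - 1) * d / 2)" by blast
    have "K \<in> UNIV // R" using singleton.prems(1) by blast
    from arranged_class[OF R this c] show ?case by auto
  next
    case (insert K \<C>)
    have "\<exists>\<tau> c. arranged R d p (\<Union>\<C>) \<tau> c"
      by (rule insert.IH) (use insert.prems in auto)
    then obtain \<tau> c1 where arr: "arranged R d p (\<Union>\<C>) \<tau> c1" by blast
    obtain c2 where c2: "p ` K \<subseteq> cball c2 ((real (card K) - 1) * d / 2)"
      using insert.prems(2)[of K] by blast
    have K: "K \<in> UNIV // R" using insert.prems(1) by blast
    have "X \<inter> K = {}" if "X \<in> \<C>" for X
      using quotient_disj[OF R, of X K] K that \<open>K \<notin> \<C>\<close> insert.prems(1) by blast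
    then have disj: "\<Union>\<C> \<inter> K = {}" by blast
    obtain X where "X \<in> \<C>" using \<open>\<C> \<noteq> {}\<close> by blast
    moreover from this have "X \<noteq> {}"
      using insert.prems(1) in_quotient_imp_non_empty[OF R] by blast
    ultimately have "\<Union>\<C> \<noteq> {}" by blast
    from arranged_insert_class[OF R K disj this \<open>0 \<le> d\<close> arr c2]
    show ?case by (metis Union_insert)
  qed
qed

lemma translate_chained_classes_apart:
  fixes p :: "'i::finite \<Rightarrow> 'a::{real_inner, perfect_space}"
  assumes "0 \<le> \<delta>" "\<delta> \<le> d"
  obtains b where "\<And>i j. b i \<noteq> b j \<Longrightarrow> \<delta> < dist (p i) (p j) \<and> d \<le> dist (p i + b i) (p j + b j)"
    and "\<And>i. norm (p i + b i) \<le> (real CARD('i) - 1) * d / 2"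
proof -
  define R where "R = chained \<delta> p"
  have R: "equiv UNIV R" unfolding R_def by (rule equiv_chained)
  have cover: "\<exists>c. p ` K \<subseteq> cball c ((real (card K) - 1) * d / 2)" if K: "K \<in> UNIV // R" for K
  proof -
    obtain c where "p ` K \<subseteq> cball c ((real (card K) - 1) * \<delta> / 2)"
      using K unfolding R_def by (rule chained_class_cover[OF _ finite \<open>0 \<le> \<delta>\<close>])
    moreover have "1 \<le> card K"
      using in_quotient_imp_non_empty[OF R K] by (simp add: Suc_leI card_gt_0_iff)
    then have "(real (card K) - 1) * \<delta> / 2 \<le> (real (card K) - 1) * d / 2"
      using \<open>\<delta> \<le> d\<close> by (simp add: mult_left_mono divide_right_mono)
    ultimately show ?thesis by (meson order_trans subset_cball)
  qed
  obtain \<tau> c where "arranged R d p UNIV \<tau> c"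
    using arranged_classes[OF R subset_refl _ _ cover] \<open>\<delta> \<le> d\<close> \<open>0 \<le> \<delta>\<close>
    unfolding Union_quotient[OF R] by force
  then have apart: "\<forall>i j. (i, j) \<notin> R \<longrightarrow> d \<le> dist (p i + \<tau> (R``{i})) (p j + \<tau> (R``{j}))"
    and inside: "(\<lambda>i. p i + \<tau> (R``{i})) ` UNIV \<subseteq> cball c ((real CARD('i) - 1) * d / 2)"
    unfolding arranged_def by auto
  show thesis
  proof (rule that[of "\<lambda>i. \<tau> (R``{i}) - c"])
    fix i j assume "\<tau> (R``{i}) - c \<noteq> \<tau> (R``{j}) - c"
    then have "(i, j) \<notin> R" using equiv_class_eq[OF R] by metis
    moreover have "(i, j) \<in> R" if "dist (p i) (p j) \<le> \<delta>"
      using that unfolding R_def chained_def by auto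
    moreover have "dist (p i + (\<tau> (R``{i}) - c)) (p j + (\<tau> (R``{j}) - c))
        = dist (p i + \<tau> (R``{i})) (p j + \<tau> (R``{j}))"
      by (simp add: dist_norm algebra_simps)
    ultimately show "\<delta> < dist (p i) (p j) \<and> d \<le> dist (p i + (\<tau> (R``{i}) - c)) (p j + (\<tau> (R``{j}) - c))"
      using apart by force
  next
    fix i
    have "norm (p i + (\<tau> (R``{i}) - c)) = dist c (p i + \<tau> (R``{i}))"
      by (simp add: dist_norm norm_minus_commute algebra_simps)
    also have "\<dots> \<le> (real CARD('i) - 1) * d / 2" using subsetD[OF inside, of "p i + \<tau> (R``{i})"] by simp
    finally show "norm (p i + (\<tau> (R``{i}) - c)) \<le> (real CARD('i) - 1) * d / 2" .
  qed
qed

lemma assoc_set_subset_cball: "assoc_set A v r i \<subseteq> cball (v$i) r"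
  by (cases A) (auto simp: assoc_set_def)

lemma assoc_sets_disjoint_if_far:
  assumes "2 * r < dist (v$i) (v$j)"
  shows "assoc_set A v r i \<inter> assoc_set A v r j = {}"
proof (rule ccontr)
  assume "assoc_set A v r i \<inter> assoc_set A v r j \<noteq> {}"
  then obtain x where "x \<in> assoc_set A v r i" "x \<in> assoc_set A v r j" by blast
  then have "dist (v$i) x \<le> r" "dist (v$j) x \<le> r"
    using subsetD[OF assoc_set_subset_cball] by (simp_all only: mem_cball)
  then show False using assms dist_triangle2[of "v$i" "v$j" x] by linarith
qed

lemma dist_le_dist_if_far:
  fixes x y z :: "'a::metric_space"
  assumes "dist x y \<le> r" "2 * r < dist y z"
  shows "dist x y \<le> dist x z"
  using assms dist_triangle[of y z x] dist_commute[of x y] by linarith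

lemma mem_assoc_set_piecewise_similar:
  fixes u v :: "(real^'d)^'n" and b :: "'n \<Rightarrow> real^'d"
  assumes "0 < s" and u: "\<And>i. u$i = s *\<^sub>R v$i + b i"
    and far: "\<And>i j. b i \<noteq> b j \<Longrightarrow> 2 * r < dist (v$i) (v$j) \<and> 2 * (s * r) < dist (u$i) (u$j)"
  shows "s *\<^sub>R x + b i \<in> assoc_set A u (s * r) i \<longleftrightarrow> x \<in> assoc_set A v r i"
proof -
  have scaled: "dist (s *\<^sub>R x + b i) (u$j) = s * dist x (v$j)" if "b j = b i" for j
    using \<open>0 < s\<close> that by (simp add: u dist_norm flip: scaleR_diff_right)
  have ball: "s *\<^sub>R x + b i \<in> cball (u$i) (s * r) \<longleftrightarrow> x \<in> cball (v$i) r"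
    using scaled[of i] \<open>0 < s\<close> by (simp add: dist_commute)
  have "dist (s *\<^sub>R x + b i) (u$i) \<le> dist (s *\<^sub>R x + b i) (u$j) \<longleftrightarrow> dist x (v$i) \<le> dist x (v$j)"
    if "x \<in> cball (v$i) r" for j
  proof (cases "b j = b i")
    case True
    then show ?thesis using scaled[of i] scaled[of j] \<open>0 < s\<close> by simp
  next
    case False
    then have "2 * r < dist (v$i) (v$j)" "2 * (s * r) < dist (u$i) (u$j)" using far by metis+
    moreover have "dist (s *\<^sub>R x + b i) (u$i) \<le> s * r" "dist x (v$i) \<le> r"
      using that ball by (auto simp: dist_commute)
    ultimately show ?thesis using dist_le_dist_if_far by metis
  qed
  with ball show ?thesis
    by (cases A) (auto simp: assoc_set_def voronoi_cell_def)
qed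

lemma geom_graph_piecewise_similar:
  fixes u v :: "(real^'d)^'n" and b :: "'n \<Rightarrow> real^'d"
  assumes "0 < s" and u: "\<And>i. u$i = s *\<^sub>R v$i + b i"
    and far: "\<And>i j. b i \<noteq> b j \<Longrightarrow> 2 * r < dist (v$i) (v$j) \<and> 2 * (s * r) < dist (u$i) (u$j)"
  shows "geom_graph u (s * r) A = geom_graph v r A"
proof -
  note mem = mem_assoc_set_piecewise_similar[OF assms]
  have "assoc_set A u (s * r) i \<inter> assoc_set A u (s * r) j = {}
      \<longleftrightarrow> assoc_set A v r i \<inter> assoc_set A v r j = {}" for i j
  proof (cases "b i = b j")
    case True
    have "y = s *\<^sub>R ((1 / s) *\<^sub>R (y - b i)) + b i" for y
      using \<open>0 < s\<close> by simp
    then have "(\<exists>y. y \<in> assoc_set A u (s * r) i \<and> y \<in> assoc_set A u (s * r) j)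
        \<longleftrightarrow> (\<exists>x. x \<in> assoc_set A v r i \<and> x \<in> assoc_set A v r j)"
      using mem[of _ i] mem[of _ j] True by metis
    then show ?thesis by blast
  next
    case False
    then show ?thesis using far assoc_sets_disjoint_if_far by metis
  qed
  then show ?thesis unfolding geom_graph_def by simp
qed

lemma feasible_imp_realizable:
  fixes Q :: "((real^'d)^'n) measure"
  assumes "feasible Q A \<Gamma>"
  obtains r and v :: "(real^'d)^'n" where "0 < r" "graph_iso (geom_graph v r A) \<Gamma>"
proof -
  obtain r where "0 < r" and pos: "0 < measure Q {v \<in> space Q. graph_iso (geom_graph v r A) \<Gamma>}"
    using assms unfolding feasible_def by blast
  then have "{v \<in> space Q. graph_iso (geom_graph v r A) \<Gamma>} \<noteq> {}"
    by (metis measure_empty less_irrefl)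
  then obtain v :: "(real^'d)^'n" where "graph_iso (geom_graph v r A) \<Gamma>" by blast
  with \<open>0 < r\<close> show thesis by (rule that)
qed

lemma geom_graph_in_unit_ball:
  fixes v :: "(real^'d)^'n"
  assumes "0 < r"
  obtains u :: "(real^'d)^'n" where "\<forall>i. u$i \<in> cball 0 1" "geom_graph u (1 / real CARD('n)) A = geom_graph v r A"
proof -
  define n where "n = real CARD('n)"
  define s where "s = 1 / (n * r)"
  define d where "d = 2 / n + 2 / (n * n)"
  have "1 \<le> n" unfolding n_def by (simp add: Suc_leI)
  have "0 < s" "s * r = 1 / n" using \<open>1 \<le> n\<close> \<open>0 < r\<close> by (simp_all add: s_def)
  have "2 * (s * r) < d" using \<open>1 \<le> n\<close> by (simp add: \<open>s * r = 1 / n\<close> d_def)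
  have "(n - 1) * d / 2 = 1 - 1 / (n * n)" using \<open>1 \<le> n\<close> by (simp add: d_def field_simps)
  then have "(n - 1) * d / 2 \<le> 1" by simp
  obtain b where
    far: "\<And>i j. b i \<noteq> b j \<Longrightarrow> 2 * (s * r) < dist (s *\<^sub>R v$i) (s *\<^sub>R v$j)
        \<and> d \<le> dist (s *\<^sub>R v$i + b i) (s *\<^sub>R v$j + b j)"
    and inside: "\<And>i. norm (s *\<^sub>R v$i + b i) \<le> (n - 1) * d / 2"
    unfolding n_def
    by (rule translate_chained_classes_apart[of "2 * (s * r)" d "\<lambda>i. s *\<^sub>R v$i"])
      (use \<open>0 < s\<close> \<open>0 < r\<close> \<open>2 * (s * r) < d\<close> in auto)
  define u :: "(real^'d)^'n" where "u = (\<chi> i. s *\<^sub>R v$i + b i)"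
  have u: "u$i = s *\<^sub>R v$i + b i" for i by (simp add: u_def)
  have "geom_graph u (s * r) A = geom_graph v r A"
  proof (rule geom_graph_piecewise_similar[OF \<open>0 < s\<close> u])
    fix i j assume "b i \<noteq> b j"
    moreover have "dist (s *\<^sub>R v$i) (s *\<^sub>R v$j) = s * dist (v$i) (v$j)"
      using \<open>0 < s\<close> by (simp add: dist_norm flip: scaleR_diff_right)
    ultimately show "2 * r < dist (v$i) (v$j) \<and> 2 * (s * r) < dist (u$i) (u$j)"
      using far[of i j] \<open>0 < s\<close> \<open>2 * (s * r) < d\<close> by (simp add: u mult.left_commute[of 2 s])
  qed
  moreover have "u$i \<in> cball 0 1" for i
    using inside[of i] \<open>(n - 1) * d / 2 \<le> 1\<close> by (simp add: u)
  ultimately show thesis using \<open>s * r = 1 / n\<close> unfolding n_def by (intro that[of u]) auto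
qed

theorem mainTheorem1:
  fixes Q :: "((real^'d)^'n) measure" and A :: convex_class and \<Gamma> :: "'a set \<times> 'a set set"
  assumes "prob_space Q" and "sets Q = sets borel" and "feasible Q A \<Gamma>"
  shows "\<exists>v :: (real^'d)^'n. (\<forall>i. v$i \<in> cball 0 1) \<and>
           graph_iso (geom_graph v (1 / real CARD('n)) A) \<Gamma>"
proof -
  obtain r and w :: "(real^'d)^'n" where "0 < r" "graph_iso (geom_graph w r A) \<Gamma>"
    using feasible_imp_realizable[OF assms(3)] by blast
  moreover obtain v :: "(real^'d)^'n" where
    "\<forall>i. v$i \<in> cball 0 1" "geom_graph v (1 / real CARD('n)) A = geom_graph w r A"
    using geom_graph_in_unit_ball[OF \<open>0 < r\<close>] by blast
  ultimately show ?thesis by auto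
qed

end
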